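(* There exist an integer $k \geq 1$ and maximum speeds $v_1, \dots, v_k > 0$ for which the partition-based strategy is not optimal: for some $l > (v_1 + \dots + v_k)/2$ there is a strategy for $k$ agents with maximum speeds $v_1, \dots, v_k$ that patrols the fence $[0, l]$.
   Context: Fence patrolling: a fence is a segment $[0,l]$ with $l>0$. There are $k$ agents $a_1,\dots,a_k$ with given maximum speeds $v_1,\dots,v_k>0$. The motion of agent $a_i$ is a function $a_i\colon[0,\infty)\to[0,l]$ satisfying $|a_i(t)-a_i(t+\epsilon)|\le v_i\epsilon$ for all $t\ge 0$, $\epsilon>0$. Agents may move in both directions and may pass each other. A strategy is a $k$-tuple $(a_1,\dots,a_k)$ of such functions. Agent $a_i$ covers the pair $(x;t^* )$ if $a_i(t)=x$ for some $t\in[t^*-1,t^* )$. A strategy patrols $[0,l]$ if for every $x\in[0,l]$ and every $t^*\in[1,\infty)$ some agent $a_i$ covers $(x;t^* )$. The partition-based strategy splits $[0,l]$ into $k$ consecutive segments of lengths proportional to $v_1,\dots,v_k$, with agent $a_i$ moving back and forth at full speed between the endpoints of the $i$-th segment; it patrols a fence of length $(v_1+\dots+v_k)/2$. It is called optimal for given speeds if no strategy for those speeds patrols a fence longer than $(v_1+\dots+v_k)/2$. *)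

theory Defs
  imports Complex_Main
begin

definition valid_motion :: "real \<Rightarrow> real \<Rightarrow> (real \<Rightarrow> real) \<Rightarrow> bool" where
  "valid_motion l vi ai \<longleftrightarrow>
     (\<forall>t\<ge>0. 0 \<le> ai t \<and> ai t \<le> l) \<and>
     (\<forall>t\<ge>0. \<forall>\<epsilon>>0. \<bar>ai t - ai (t + \<epsilon>)\<bar> \<le> vi * \<epsilon>)"

definition is_strategy :: "nat \<Rightarrow> (nat \<Rightarrow> real) \<Rightarrow> real \<Rightarrow> (nat \<Rightarrow> real \<Rightarrow> real) \<Rightarrow> bool" where
  "is_strategy k v l a \<longleftrightarrow> (\<forall>i<k. valid_motion l (v i) (a i))"

definition covers :: "(real \<Rightarrow> real) \<Rightarrow> real \<Rightarrow> real \<Rightarrow> bool" where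
  "covers ai x tstar \<longleftrightarrow> (\<exists>t. tstar - 1 \<le> t \<and> t < tstar \<and> ai t = x)"

definition patrols :: "nat \<Rightarrow> real \<Rightarrow> (nat \<Rightarrow> real \<Rightarrow> real) \<Rightarrow> bool" where
  "patrols k l a \<longleftrightarrow>
     (\<forall>x. 0 \<le> x \<and> x \<le> l \<longrightarrow> (\<forall>tstar\<ge>1. \<exists>i<k. covers (a i) x tstar))"

end

theory Submission
  imports Defs "HOL-Analysis.Analysis"
begin

text \<open>Cut the fence [0, 99/4] into eleven cells of length 9/4. Every agent runs a
  zigzag of round-trip time 3 or 1, so a point is patrolled as soon as its visit times
  within one period leave no gap longer than 1. Ten agents of speed 3 each sweep two
  adjacent cells, so a point at offset 3a inside an interior cell is visited at the
  times \<plusminus>a and \<plusminus>(3/4 + a) modulo 3. The gap between 3/4 + a and 9/4 - a exceeds 1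
  only near a cell boundary, where it is closed by one of ten agents of speed 1
  sweeping [-3/4, 3/4] around that boundary, half a time unit out of phase. Two agents
  of speed 9/2 and period 1 guard the end cells on their own. The total speed is
  30 + 10 + 9 = 49 < 2 \<cdot> 99/4.\<close>

definition grid_dist :: "real \<Rightarrow> real \<Rightarrow> real" where
  "grid_dist P u = infdist u (range (\<lambda>m::int. P * of_int m))"

lemma grid_dist_le: "grid_dist P u \<le> \<bar>u - P * of_int m\<bar>"
proof -
  have "P * of_int m \<in> range (\<lambda>m::int. P * of_int m)" by blast
  then show ?thesis unfolding grid_dist_def dist_real_def[symmetric] by (rule infdist_le)
qed

lemma grid_dist_ge:
  assumes "\<And>m::int. d \<le> \<bar>u - P * of_int m\<bar>"
  shows "d \<le> grid_dist P u"
proof -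
  have "d \<le> (INF a\<in>range (\<lambda>m::int. P * of_int m). dist u a)"
    by (rule cINF_greatest) (auto simp: dist_real_def assms)
  then show ?thesis unfolding grid_dist_def by (simp add: infdist_notempty)
qed

lemma grid_dist_nonneg: "0 \<le> grid_dist P u"
  unfolding grid_dist_def by (rule infdist_nonneg)

lemma grid_dist_le_half:
  assumes "P > 0"
  shows "grid_dist P u \<le> P / 2"
proof -
  have "u - P * of_int (round (u / P)) = P * (u / P - of_int (round (u / P)))"
    using assms by (simp add: right_diff_distrib)
  then have "\<bar>u - P * of_int (round (u / P))\<bar> = P * \<bar>of_int (round (u / P)) - u / P\<bar>"
    using assms by (simp add: abs_mult abs_minus_commute)
  also have "\<dots> \<le> P * (1/2)"
    using assms of_int_round_abs_le[of "u / P"] by (intro mult_left_mono) auto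
  finally show ?thesis using grid_dist_le[of P u "round (u / P)"] by linarith
qed

lemma grid_dist_lipschitz: "\<bar>grid_dist P u - grid_dist P w\<bar> \<le> \<bar>u - w\<bar>"
  unfolding grid_dist_def using infdist_triangle_abs by (metis dist_real_def)

lemma grid_dist_shift_le: "grid_dist P (u + P * of_int m) \<le> grid_dist P u"
proof (rule grid_dist_ge)
  fix n :: int
  have "grid_dist P (u + P * of_int m) \<le> \<bar>u + P * of_int m - P * of_int (n + m)\<bar>"
    by (rule grid_dist_le)
  then show "grid_dist P (u + P * of_int m) \<le> \<bar>u - P * of_int n\<bar>"
    by (simp add: algebra_simps)
qed

lemma grid_dist_shift: "grid_dist P (u + P * of_int m) = grid_dist P u"
  using grid_dist_shift_le[of P u m] grid_dist_shift_le[of P "u + P * of_int m" "- m"]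
  by simp

lemma grid_dist_small:
  assumes "P > 0" "\<bar>e\<bar> \<le> P / 2"
  shows "grid_dist P e = \<bar>e\<bar>"
proof (rule antisym)
  show "grid_dist P e \<le> \<bar>e\<bar>" using grid_dist_le[of P e 0] by simp
  show "\<bar>e\<bar> \<le> grid_dist P e"
  proof (rule grid_dist_ge)
    fix m :: int
    show "\<bar>e\<bar> \<le> \<bar>e - P * of_int m\<bar>"
    proof (cases "m = 0")
      case False
      then have "P \<le> \<bar>P * of_int m\<bar>"
        using assms(1) by (simp add: abs_mult)
      then show ?thesis using assms(2) by linarith
    qed simp
  qed
qed

text \<open>An agent running back and forth at speed v between b and b + v P / 2,
  with round-trip time P, and standing at b at the times ph + P \<int>.\<close>
definition zigzag :: "real \<Rightarrow> real \<Rightarrow> real \<Rightarrow> real \<Rightarrow> real \<Rightarrow> real" where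
  "zigzag b v P ph t = b + v * grid_dist P (t - ph)"

lemma valid_motion_zigzag:
  assumes "0 \<le> b" "b + v * (P / 2) \<le> l" "0 \<le> v" "P > 0"
  shows "valid_motion l v (zigzag b v P ph)"
  unfolding valid_motion_def
proof (intro conjI allI impI)
  fix t :: real
  have "0 \<le> v * grid_dist P (t - ph)" "v * grid_dist P (t - ph) \<le> v * (P / 2)"
    using assms(3) grid_dist_nonneg mult_left_mono[OF grid_dist_le_half[OF assms(4)] assms(3)]
    by simp_all
  then show "0 \<le> zigzag b v P ph t" "zigzag b v P ph t \<le> l"
    using assms(1,2) unfolding zigzag_def by linarith+
next
  fix t \<epsilon> :: real
  assume "0 < \<epsilon>"
  have "\<bar>zigzag b v P ph t - zigzag b v P ph (t + \<epsilon>)\<bar>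
      = v * \<bar>grid_dist P (t - ph) - grid_dist P (t + \<epsilon> - ph)\<bar>"
    unfolding zigzag_def using assms(3) by (simp add: abs_mult right_diff_distrib[symmetric])
  also have "\<dots> \<le> v * \<bar>(t - ph) - (t + \<epsilon> - ph)\<bar>"
    using assms(3) grid_dist_lipschitz by (rule mult_left_mono[rotated])
  finally show "\<bar>zigzag b v P ph t - zigzag b v P ph (t + \<epsilon>)\<bar> \<le> v * \<epsilon>"
    using \<open>0 < \<epsilon>\<close> by simp
qed

lemma zigzag_periodic: "zigzag b v P ph (t + P * of_int m) = zigzag b v P ph t"
  unfolding zigzag_def using grid_dist_shift[of P "t - ph" m] by (simp add: algebra_simps)

lemma zigzag_at:
  assumes "P > 0" "\<bar>e\<bar> \<le> P / 2"
  shows "zigzag b v P ph (ph + e) = b + v * \<bar>e\<bar>"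
  unfolding zigzag_def using grid_dist_small[OF assms] by simp

lemma window_meets_chain:
  fixes xs :: "real list"
  assumes "successively (\<lambda>u w. w \<le> u + 1) xs" "xs \<noteq> []" "hd xs < r" "r \<le> last xs"
  shows "\<exists>u\<in>set xs. r - 1 \<le> u \<and> u < r"
  using assms
proof (induction xs rule: induct_list012)
  case (3 u w rest)
  show ?case
  proof (cases "r \<le> w")
    case True
    then show ?thesis using "3.prems" by auto
  next
    case False
    then have "\<exists>u\<in>set (w # rest). r - 1 \<le> u \<and> u < r"
      using "3.prems" by (intro "3.IH"(2)) auto
    then show ?thesis by auto
  qed
qed auto

lemma window_meets_periodic:
  fixes S :: "real set"
  assumes "P > 0" and periodic: "\<And>t m. t \<in> S \<Longrightarrow> t + P * of_int m \<in> S"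
    and "set xs \<subseteq> S" "xs \<noteq> []"
    and gaps: "successively (\<lambda>u w. w \<le> u + 1) xs" "hd xs + P \<le> last xs + 1"
  shows "\<exists>t\<in>S. s - 1 \<le> t \<and> t < s"
proof -
  define m where "m = \<lceil>(s - hd xs) / P\<rceil> - 1"
  have "of_int m < (s - hd xs) / P" "(s - hd xs) / P \<le> of_int m + 1"
    unfolding m_def by linarith+
  then have r: "hd xs < s - P * of_int m" "s - P * of_int m \<le> hd xs + P"
    using assms(1) by (simp_all add: field_simps)
  define ys where "ys = xs @ [hd xs + P]"
  have "successively (\<lambda>u w. w \<le> u + 1) ys" "hd ys = hd xs" "last ys = hd xs + P"
    using assms(4) gaps by (simp_all add: ys_def successively_append_iff)
  then obtain u where u: "u \<in> set ys" "s - P * of_int m - 1 \<le> u" "u < s - P * of_int m"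
    using window_meets_chain[of ys "s - P * of_int m"] r by (auto simp: ys_def)
  have "hd xs \<in> S" using assms(3,4) by auto
  then have "u \<in> S"
    using u(1) assms(3) periodic[of "hd xs" 1] by (auto simp: ys_def)
  then have "u + P * of_int m \<in> S" by (rule periodic)
  with u(2,3) show ?thesis by (intro bexI[of _ "u + P * of_int m"]) auto
qed

lemma covers_zigzag:
  assumes "0 < P" "P \<le> 1" "0 \<le> e" "e \<le> P / 2"
  shows "covers (zigzag b v P ph) (b + v * e) ts"
proof -
  define S where "S = {t. zigzag b v P ph t = b + v * e}"
  have "set [ph - e, ph + e] \<subseteq> S"
    using zigzag_at[of P "- e" b v ph] zigzag_at[of P e b v ph] assms by (simp add: S_def)
  moreover have "t + P * of_int m \<in> S" if "t \<in> S" for t m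
    using that by (simp add: S_def zigzag_periodic)
  ultimately obtain t where "t \<in> S" "ts - 1 \<le> t" "t < ts"
    using window_meets_periodic[of P S "[ph - e, ph + e]" ts] assms by auto
  then show ?thesis unfolding covers_def S_def by blast
qed

definition speed :: "nat \<Rightarrow> real" where
  "speed i = (if i < 10 then 3 else if i < 20 then 1 else 9/2)"

definition agent :: "nat \<Rightarrow> real \<Rightarrow> real" where
  "agent i =
     (if i < 10 then zigzag (9/4 * real i) 3 3 0
      else if i < 20 then zigzag (3/2 + 9/4 * real (i - 10)) 1 3 (1/2)
      else if i = 20 then zigzag 0 (9/2) 1 0
      else zigzag (45/2) (9/2) 1 0)"

lemma sum_speed: "(\<Sum>i<22. speed i) = 49"
  by (simp add: speed_def eval_nat_numeral)

lemma is_strategy_agent: "is_strategy 22 speed (99/4) agent"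
  unfolding is_strategy_def
proof (intro allI impI)
  fix i :: nat
  assume "i < 22"
  then consider "i < 10" | "10 \<le> i" "i < 20" | "i = 20" | "i = 21" by linarith
  then show "valid_motion (99/4) (speed i) (agent i)"
  proof cases
    case 1
    then have "real i \<le> 9" by simp
    with 1 show ?thesis unfolding agent_def speed_def by (auto intro: valid_motion_zigzag)
  next
    case 2
    then have "real (i - 10) \<le> 9" by simp
    with 2 show ?thesis unfolding agent_def speed_def by (auto intro: valid_motion_zigzag)
  qed (auto simp: agent_def speed_def intro: valid_motion_zigzag)
qed

lemma agent_periodic: "agent i (t + 3 * of_int m) = agent i t"
  using zigzag_periodic[where P = 3] zigzag_periodic[where P = 1 and m = "3 * m"]
  by (simp add: agent_def)

lemma agent_fast_at:
  "j < 10 \<Longrightarrow> \<bar>e\<bar> \<le> 3/2 \<Longrightarrow> agent j e = 9/4 * real j + 3 * \<bar>e\<bar>"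
  using zigzag_at[of 3 e _ _ 0] by (simp add: agent_def)

lemma agent_slow_at:
  "10 \<le> j \<Longrightarrow> j < 20 \<Longrightarrow> \<bar>e\<bar> \<le> 3/2 \<Longrightarrow>
    agent j (1/2 + e) = 3/2 + 9/4 * real (j - 10) + \<bar>e\<bar>"
  using zigzag_at[of 3 e _ _ "1/2"] by (simp add: agent_def)

lemma interior_cell_covered:
  assumes "i \<le> 8" "0 \<le> s" "s < 9/4"
  shows "\<exists>j<22. covers (agent j) (9/4 * (real i + 1) + s) ts"
proof -
  define x where "x = 9/4 * (real i + 1) + s"
  define S where "S = {t. \<exists>j<22. agent j t = x}"
  define a where "a = s / 3"
  have visit: "t \<in> S" if "j < 22" "agent j t = x" for j t
    using that unfolding S_def by blast
  have A1: "- a \<in> S" "a \<in> S"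
    using agent_fast_at[of "Suc i" "- a"] agent_fast_at[of "Suc i" a] assms
    by (auto intro!: visit[of "Suc i"] simp: a_def x_def algebra_simps)
  have A0: "- 3/4 - a \<in> S" "3/4 + a \<in> S"
    using agent_fast_at[of i "- 3/4 - a"] agent_fast_at[of i "3/4 + a"] assms
    by (auto intro!: visit[of i] simp: a_def x_def algebra_simps)
  have B0: "5/4 + s \<in> S" if "s \<le> 3/4"
    using agent_slow_at[of "10 + i" "3/4 + s"] assms that
    by (auto intro!: visit[of "10 + i"] simp: x_def algebra_simps)
  have B1: "2 - s \<in> S" if "3/2 \<le> s"
    using agent_slow_at[of "11 + i" "3/2 - s"] assms that
    by (auto intro!: visit[of "11 + i"] simp: x_def algebra_simps)
  obtain xs where xs: "set xs \<subseteq> S" "xs \<noteq> []" "successively (\<lambda>u w. w \<le> u + 1) xs"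
    "hd xs + 3 \<le> last xs + 1"
  proof -
    consider "s \<le> 3/4" | "3/4 \<le> s" "s \<le> 3/2" | "3/2 \<le> s" by linarith
    then show thesis
    proof cases
      case 1
      then show thesis using A0 A1 B0 assms
        by (intro that[of "[- 3/4 - a, - a, a, 3/4 + a, 5/4 + s]"]) (auto simp: a_def)
    next
      case 2
      then show thesis using A0 A1 assms
        by (intro that[of "[- 3/4 - a, - a, a, 3/4 + a]"]) (auto simp: a_def)
    next
      case 3
      then show thesis using A0 A1 B1 assms
        by (intro that[of "[- 3/4 - a, - a, 2 - s, a, 3/4 + a]"]) (auto simp: a_def)
    qed
  qed
  moreover have "t + 3 * of_int m \<in> S" if "t \<in> S" for t m
    using that by (simp add: S_def agent_periodic)
  ultimately obtain t where "t \<in> S" "ts - 1 \<le> t" "t < ts"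
    using window_meets_periodic[of 3 S xs ts] by auto
  then show ?thesis unfolding S_def x_def covers_def by blast
qed

lemma patrols_agent: "patrols 22 (99/4) agent"
  unfolding patrols_def
proof (intro allI impI)
  fix x ts :: real
  assume x: "0 \<le> x \<and> x \<le> 99/4"
  consider "x \<le> 9/4" | "45/2 \<le> x" | "9/4 < x" "x < 45/2" by linarith
  then show "\<exists>i<22. covers (agent i) x ts"
  proof cases
    case 1
    have "covers (zigzag 0 (9/2) 1 0) (0 + 9/2 * (2/9 * x)) ts"
      by (rule covers_zigzag) (use x 1 in auto)
    then show ?thesis by (intro exI[of _ 20]) (simp add: agent_def)
  next
    case 2
    have "covers (zigzag (45/2) (9/2) 1 0) (45/2 + 9/2 * (2/9 * (x - 45/2))) ts"
      by (rule covers_zigzag) (use x 2 in auto)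
    moreover have "45/2 + 9/2 * (2/9 * (x - 45/2)) = x" by (simp add: field_simps)
    ultimately show ?thesis by (intro exI[of _ 21]) (simp add: agent_def)
  next
    case 3
    define n where "n = \<lfloor>4/9 * x\<rfloor>"
    have n: "1 \<le> n" "n \<le> 9" "of_int n \<le> 4/9 * x" "4/9 * x < of_int n + 1"
      using 3 unfolding n_def by (simp_all add: le_floor_iff floor_le_iff) linarith+
    define i where "i = nat n - 1"
    have i: "i \<le> 8" "real i + 1 = of_int n"
      using n(1,2) unfolding i_def by (simp_all add: of_nat_diff)
    have "0 \<le> x - 9/4 * (real i + 1)" "x - 9/4 * (real i + 1) < 9/4"
      unfolding i(2) using n(3,4) by linarith+
    from interior_cell_covered[OF i(1) this] show ?thesis by simp
  qed
qed

theorem theorem1: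
  shows "\<exists>(k::nat) (v::nat \<Rightarrow> real). k \<ge> 1 \<and> (\<forall>i<k. v i > 0) \<and>
           (\<exists>l a. l > (\<Sum>i<k. v i) / 2 \<and> is_strategy k v l a \<and> patrols k l a)"
proof (intro exI conjI)
  show "(1::nat) \<le> 22" by simp
  show "\<forall>i<22. speed i > 0" by (simp add: speed_def)
  show "99/4 > (\<Sum>i<22. speed i) / 2" by (simp add: sum_speed)
  show "is_strategy 22 speed (99/4) agent" by (rule is_strategy_agent)
  show "patrols 22 (99/4) agent" by (rule patrols_agent)
qed

end
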